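(* Let $(X,r)$ be a non-degenerate symmetric set of arbitrary cardinality with $|X|\ge2$ which is not the trivial solution. The conditions (i) $\mathcal{L}_{{}^xa}=\mathcal{L}_a$ for all $a,x\in X$, and (ii) $\mathcal{L}_{a^x}=\mathcal{L}_a$ for all $a,x\in X$, are equivalent, and each of them implies condition lri: $({}^xy)^x=y={}^x(y^x)$ for all $x,y\in X$.
   Context: A symmetric set is a pair $(X,r)$, $X$ nonempty, $r(x,y)=({}^xy,x^y)$ a bijection of $X\times X$ which is non-degenerate (each $\mathcal{L}_x:y\mapsto{}^xy$ and $y\mapsto y^x$ is bijective), involutive ($r^2=\mathrm{id}$), and satisfies $r^{12}r^{23}r^{12}=r^{23}r^{12}r^{23}$ on $X^3$. The trivial solution is $r(x,y)=(y,x)$. *)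

theory Defs
  imports Main
begin

text \<open>A map r on X x X (here X = UNIV of type 'a) is written r(x,y) = (lam x y, rho y x),
 where lam x y stands for the left action of x on y and rho x y for y raised to the right action of x.\<close>

definition lam :: "('a \<times> 'a \<Rightarrow> 'a \<times> 'a) \<Rightarrow> 'a \<Rightarrow> 'a \<Rightarrow> 'a" where
  "lam r x y = fst (r (x, y))"

definition rho :: "('a \<times> 'a \<Rightarrow> 'a \<times> 'a) \<Rightarrow> 'a \<Rightarrow> 'a \<Rightarrow> 'a" where
  "rho r x y = snd (r (y, x))"

definition r12 :: "('a \<times> 'a \<Rightarrow> 'a \<times> 'a) \<Rightarrow> 'a \<times> 'a \<times> 'a \<Rightarrow> 'a \<times> 'a \<times> 'a" where
  "r12 r t = (case t of (x, y, z) \<Rightarrow> (case r (x, y) of (u, v) \<Rightarrow> (u, v, z)))"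

definition r23 :: "('a \<times> 'a \<Rightarrow> 'a \<times> 'a) \<Rightarrow> 'a \<times> 'a \<times> 'a \<Rightarrow> 'a \<times> 'a \<times> 'a" where
  "r23 r t = (case t of (x, y, z) \<Rightarrow> (case r (y, z) of (u, v) \<Rightarrow> (x, u, v)))"

definition symmetric_set :: "('a \<times> 'a \<Rightarrow> 'a \<times> 'a) \<Rightarrow> bool" where
  "symmetric_set r \<longleftrightarrow>
     bij r
   \<and> (\<forall>x. bij (lam r x)) \<and> (\<forall>x. bij (rho r x))
   \<and> r \<circ> r = id
   \<and> r12 r \<circ> r23 r \<circ> r12 r = r23 r \<circ> r12 r \<circ> r23 r"

definition trivial_solution :: "('a \<times> 'a \<Rightarrow> 'a \<times> 'a)" where
  "trivial_solution = (\<lambda>(x, y). (y, x))"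

end

theory Submission
  imports Defs
begin

text \<open>Write x.y for the left and y^x for the right action. Involutivity says that r maps
  (x.y, y^x) back to (x, y), i.e. (x.y).(y^x) = x and (y^x)^(x.y) = y. Hence the left action
  of a is unchanged by left actions on a iff it is unchanged by right actions on a. Under (i)
  the first identity becomes x.(z^x) = z, and injectivity of the left action of x gives the
  other half of lri.\<close>

lemma lam_lam_rho_eq:
  assumes "r \<circ> r = id"
  shows "lam r (lam r x y) (rho r y x) = x"
proof -
  have "r (r (x, y)) = (x, y)" using assms by (metis comp_apply id_apply)
  then show ?thesis unfolding lam_def rho_def by (metis fst_conv prod.collapse)
qed

lemma rho_rho_lam_eq:
  assumes "r \<circ> r = id"
  shows "rho r (rho r y x) (lam r x y) = y"
proof -
  have "r (r (x, y)) = (x, y)" using assms by (metis comp_apply id_apply)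
  then show ?thesis unfolding lam_def rho_def by (metis snd_conv prod.collapse)
qed

lemma lam_lam_invariant_iff_lam_rho_invariant:
  assumes "r \<circ> r = id"
  shows "(\<forall>a x. lam r (lam r x a) = lam r a) \<longleftrightarrow> (\<forall>a x. lam r (rho r x a) = lam r a)"
proof
  assume lam_inv: "\<forall>a x. lam r (lam r x a) = lam r a"
  show "\<forall>a x. lam r (rho r x a) = lam r a"
  proof (intro allI)
    fix a x
    have "lam r (lam r (lam r a x) (rho r x a)) = lam r (rho r x a)" using lam_inv by blast
    then show "lam r (rho r x a) = lam r a" by (simp add: lam_lam_rho_eq[OF assms])
  qed
next
  assume rho_inv: "\<forall>a x. lam r (rho r x a) = lam r a"
  show "\<forall>a x. lam r (lam r x a) = lam r a"
  proof (intro allI)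
    fix a x
    have "lam r (rho r (rho r a x) (lam r x a)) = lam r (lam r x a)" using rho_inv by blast
    then show "lam r (lam r x a) = lam r a" by (simp add: rho_rho_lam_eq[OF assms])
  qed
qed

lemma lri_if_lam_lam_invariant:
  assumes "r \<circ> r = id" and "\<forall>x. inj (lam r x)"
    and lam_inv: "\<forall>a x. lam r (lam r x a) = lam r a"
  shows "rho r x (lam r x y) = y \<and> lam r x (rho r x y) = y"
proof -
  have lam_rho: "lam r x (rho r x z) = z" for z
    using lam_lam_rho_eq[OF assms(1), of z x] lam_inv by metis
  have "lam r x (rho r x (lam r x y)) = lam r x y" by (rule lam_rho)
  then have "rho r x (lam r x y) = y" using assms(2) by (simp add: inj_eq)
  with lam_rho show ?thesis by blast
qed

theorem mainTheorem12:
  fixes r :: "'a \<times> 'a \<Rightarrow> 'a \<times> 'a"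
  assumes "symmetric_set r"
    and "\<exists>a b :: 'a. a \<noteq> b"
    and "r \<noteq> trivial_solution"
  shows "((\<forall>a x. lam r (lam r x a) = lam r a) \<longleftrightarrow> (\<forall>a x. lam r (rho r x a) = lam r a))
       \<and> ((\<forall>a x. lam r (lam r x a) = lam r a) \<longrightarrow>
            (\<forall>x y. rho r x (lam r x y) = y \<and> lam r x (rho r x y) = y))
       \<and> ((\<forall>a x. lam r (rho r x a) = lam r a) \<longrightarrow>
            (\<forall>x y. rho r x (lam r x y) = y \<and> lam r x (rho r x y) = y))"
proof -
  have invol: "r \<circ> r = id" and inj_lam: "\<forall>x. inj (lam r x)"
    using assms(1) unfolding symmetric_set_def by (auto simp: bij_is_inj)
  show ?thesis
    using lam_lam_invariant_iff_lam_rho_invariant[OF invol]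
      lri_if_lam_lam_invariant[OF invol inj_lam] by blast
qed

end
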